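(* Assume the Lipschitz gradient assumption, $r_1>L_x$, $r_2>L_y$, and the dual K\L{} assumption with exponent $\theta\in(0,1)$. If $(x,y)\in\mathcal X\times\mathcal Y$ is an $\epsilon$-GS, then $x$ is an $\mathcal O(\epsilon^{\min\{1,\frac{1}{2\theta}\}})$-OS, i.e. $\|x^*(x)-x\|\le\mathcal O(\epsilon^{\min\{1,\frac1{2\theta}\}})$, where the constant depends only on the problem data and $r_1,r_2$.
   Context: Let $\mathcal X\subset\mathbb R^n$, $\mathcal Y\subset\mathbb R^d$ be nonempty convex compact sets and $f:\mathbb R^n\times\mathbb R^d\to\mathbb R$ continuously differentiable. Lipschitz gradient assumption: there are $L_x,L_y>0$ such that for all $x,x'\in\mathcal X$, $y,y'\in\mathcal Y$, $\|\nabla_x f(x,y)-\nabla_x f(x',y')\|\le L_x(\|x-x'\|+\|y-y'\|)$ and $\|\nabla_y f(x,y)-\nabla_y f(x',y')\|\le L_y(\|x-x'\|+\|y-y'\|)$. Let $N_{\mathcal X}(x)=\partial\mathbf 1_{\mathcal X}(x)$ denote the normal cone. A point $(x,y)\in\mathcal X\times\mathcal Y$ is an $\epsilon$-game stationary point ($\epsilon$-GS) if $\mathrm{dist}(0,\nabla_xf(x,y)+N_{\mathcal X}(x))\le\epsilon$ and $\mathrm{dist}(0,-\nabla_yf(x,y)+N_{\mathcal Y}(y))\le\epsilon$. For $z\in\mathbb R^n$ let $x^*(z)=\arg\min_{x\in\mathcal X}\max_{y\in\mathcal Y}\{f(x,y)+\frac{r_1}{2}\|x-z\|^2\}$ (equivalently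 the proximal point of $\max_{y\in\mathcal Y}f(\cdot,y)/r_1+\mathbf 1_{\mathcal X}$ at $z$); $z$ is an $\epsilon$-optimization stationary point ($\epsilon$-OS) if $\|x^*(z)-z\|\le\epsilon$. Dual K\L{} assumption: for every $x\in\mathcal X$, $\max_{y\in\mathcal Y}f(x,y)$ is attained and finite, and there exist $\tau>0$, $\theta\in(0,1)$ with $(\max_{y'\in\mathcal Y}f(x,y')-f(x,y))^\theta\le\frac1\tau\mathrm{dist}(0,-\nabla_yf(x,y)+N_{\mathcal Y}(y))$ for all $x\in\mathcal X$, $y\in\mathcal Y$. *)

theory Defs
  imports "HOL-Analysis.Analysis"
begin

definition normal_cone :: "'a::real_inner set \<Rightarrow> 'a \<Rightarrow> 'a set" where
  "normal_cone S x = (if x \<in> S then {v. \<forall>z\<in>S. inner v (z - x) \<le> 0} else {})"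

definition primal_max :: "'b set \<Rightarrow> ('a \<Rightarrow> 'b \<Rightarrow> real) \<Rightarrow> 'a \<Rightarrow> real" where
  "primal_max Y f x = (SUP y\<in>Y. f x y)"

text \<open>eps-game stationary point; gx, gy are the partial gradients of f.\<close>
definition game_stationary ::
  "'a::real_inner set \<Rightarrow> 'b::real_inner set \<Rightarrow> ('a \<Rightarrow> 'b \<Rightarrow> 'a) \<Rightarrow> ('a \<Rightarrow> 'b \<Rightarrow> 'b)
   \<Rightarrow> real \<Rightarrow> 'a \<Rightarrow> 'b \<Rightarrow> bool" where
  "game_stationary X Y gx gy eps x y \<longleftrightarrow>
     x \<in> X \<and> y \<in> Y \<and>
     infdist 0 ((\<lambda>v. gx x y + v) ` normal_cone X x) \<le> eps \<and>
     infdist 0 ((\<lambda>v. - gy x y + v) ` normal_cone Y y) \<le> eps"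

definition prox_point ::
  "'a::real_normed_vector set \<Rightarrow> 'b set \<Rightarrow> ('a \<Rightarrow> 'b \<Rightarrow> real) \<Rightarrow> real \<Rightarrow> 'a \<Rightarrow> 'a" where
  "prox_point X Y f r1 z =
     (THE x. x \<in> X \<and> (\<forall>x'\<in>X. primal_max Y f x + r1 / 2 * (norm (x - z))\<^sup>2
                              \<le> primal_max Y f x' + r1 / 2 * (norm (x' - z))\<^sup>2))"

definition opt_stationary ::
  "'a::real_normed_vector set \<Rightarrow> 'b set \<Rightarrow> ('a \<Rightarrow> 'b \<Rightarrow> real) \<Rightarrow> real \<Rightarrow> real \<Rightarrow> 'a \<Rightarrow> bool" where
  "opt_stationary X Y f r1 eps z \<longleftrightarrow> norm (prox_point X Y f r1 z - z) \<le> eps"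

end

theory Submission
  imports Defs
begin

(*
  Because the x-gradient of f is Lx-Lipschitz, every f(., y) lies above the concave quadratic
  u |-> f(x, y) + <grad_x f(x, y), u - x> - Lx/2 |u - x|^2 touching it at x; choosing y maximal
  at x, the same holds for P = max_y f(., y). Hence P + r1/2 |. - z|^2 is (r1 - Lx)-strongly
  convex on X and x*(z) is well defined. For an eps-GS point (x, y) and x* = x*(x), minimality
  of x* combined with the minorant of f(., y) at x gives
    (r1 - Lx)/2 |x* - x|^2 <= (P x - f(x, y)) + eps |x* - x|,
  the linear term being controlled by stationarity in x. Stationarity in y and the dual KL
  inequality bound the gap P x - f(x, y) by (eps/tau)^(1/theta), so |x* - x| is
  O(eps + eps^(1/(2 theta))); as also |x* - x| <= diam X, it is O(eps^min(1, 1/(2 theta))).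
*)

(* A negative curvature mu is allowed: mu = -L is the lower model of a function with
   L-Lipschitz gradient, while mu > 0 means strong convexity. *)
definition quadratic_support_on :: "real \<Rightarrow> 'a::real_inner set \<Rightarrow> ('a \<Rightarrow> real) \<Rightarrow> bool" where
  "quadratic_support_on \<mu> S \<phi> \<longleftrightarrow>
     (\<forall>x\<in>S. \<exists>g. \<forall>u\<in>S. \<phi> x + inner g (u - x) + \<mu> / 2 * (norm (u - x))\<^sup>2 \<le> \<phi> u)"

lemma lipschitz_gradient_lower_bound:
  fixes \<phi> :: "'a::real_inner \<Rightarrow> real"
  assumes S: "convex S"
    and deriv: "\<And>x. x \<in> S \<Longrightarrow> (\<phi> has_derivative (\<lambda>h. inner (g x) h)) (at x)"
    and lip: "\<And>x x'. x \<in> S \<Longrightarrow> x' \<in> S \<Longrightarrow> norm (g x - g x') \<le> L * norm (x - x')"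
    and x: "x \<in> S" and u: "u \<in> S"
  shows "\<phi> x + inner (g x) (u - x) - L / 2 * (norm (u - x))\<^sup>2 \<le> \<phi> u"
proof -
  define v where "v = u - x"
  have seg: "x + t *\<^sub>R v \<in> S" if "0 \<le> t" "t \<le> 1" for t
  proof -
    have "(1 - t) *\<^sub>R x + t *\<^sub>R u \<in> S"
      using S x u that by (intro convexD) auto
    then show ?thesis by (simp add: v_def algebra_simps)
  qed
  define k where "k t = \<phi> (x + t *\<^sub>R v) - t * inner (g x) v + L / 2 * t\<^sup>2 * (norm v)\<^sup>2" for t
  have k_deriv: "(k has_real_derivative
      inner (g (x + t *\<^sub>R v) - g x) v + L * t * (norm v)\<^sup>2) (at t)"
    if "0 \<le> t" "t \<le> 1" for t
  proof -
    have "(\<phi> \<circ> (\<lambda>t. x + t *\<^sub>R v) has_derivative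
        (\<lambda>h. inner (g (x + t *\<^sub>R v)) h) \<circ> (\<lambda>s. s *\<^sub>R v)) (at t)"
      using deriv[OF seg[OF that]] by (intro diff_chain_at) (auto intro!: derivative_eq_intros)
    then have "((\<lambda>t. \<phi> (x + t *\<^sub>R v)) has_real_derivative inner (g (x + t *\<^sub>R v)) v) (at t)"
      by (simp add: has_field_derivative_def o_def mult.commute[of _ "inner _ v"])
    then show ?thesis
      unfolding k_def
      by (auto intro!: derivative_eq_intros simp: inner_diff_left algebra_simps power2_eq_square)
  qed
  have "k 0 \<le> k 1"
  proof (rule DERIV_nonneg_imp_increasing_open[of 0 1 k])
    show "continuous_on {0..1} k"
      by (intro continuous_at_imp_continuous_on ballI DERIV_isCont[OF k_deriv]) auto
    fix t :: real assume t: "0 < t" "t < 1"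
    have "norm (g (x + t *\<^sub>R v) - g x) \<le> L * (t * norm v)"
      using lip[OF seg x, of t] t by simp
    then have "norm (g (x + t *\<^sub>R v) - g x) * norm v \<le> L * t * (norm v)\<^sup>2"
      by (metis mult_right_mono norm_ge_zero power2_eq_square mult.assoc)
    moreover have "- inner (g (x + t *\<^sub>R v) - g x) v \<le> norm (g (x + t *\<^sub>R v) - g x) * norm v"
      using Cauchy_Schwarz_ineq2[of "g (x + t *\<^sub>R v) - g x" v] by (simp add: abs_le_iff)
    ultimately have "0 \<le> inner (g (x + t *\<^sub>R v) - g x) v + L * t * (norm v)\<^sup>2"
      by linarith
    with k_deriv t show "\<exists>d. (k has_real_derivative d) (at t) \<and> 0 \<le> d"
      by (meson less_eq_real_def)
  qed simp
  then show ?thesis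
    by (simp add: k_def v_def)
qed

lemma has_derivative_partial_fst:
  fixes f :: "'a::real_inner \<Rightarrow> 'b::real_inner \<Rightarrow> real"
  assumes "((\<lambda>p. f (fst p) (snd p)) has_derivative (\<lambda>h. inner a (fst h) + inner b (snd h))) (at (x, y))"
  shows "((\<lambda>x. f x y) has_derivative (\<lambda>h. inner a h)) (at x)"
proof -
  have "((\<lambda>p. f (fst p) (snd p)) \<circ> (\<lambda>x. (x, y)) has_derivative
      (\<lambda>h. inner a (fst h) + inner b (snd h)) \<circ> (\<lambda>h. (h, 0))) (at x)"
    using assms by (intro diff_chain_at) (auto intro!: derivative_eq_intros)
  then show ?thesis
    by (simp add: o_def)
qed

lemma uniformly_lipschitz_of_continuous_gradient:
  fixes f :: "'a::real_inner \<Rightarrow> 'b::topological_space \<Rightarrow> real"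
  assumes "convex X" "compact X" "compact Y"
    and cont: "continuous_on (X \<times> Y) (\<lambda>p. g (fst p) (snd p))"
    and deriv: "\<And>x y. x \<in> X \<Longrightarrow> y \<in> Y \<Longrightarrow> ((\<lambda>x. f x y) has_derivative (\<lambda>h. inner (g x y) h)) (at x)"
  shows "\<exists>K\<ge>0. \<forall>y\<in>Y. K-lipschitz_on X (\<lambda>x. f x y)"
proof -
  have "compact ((\<lambda>p. g (fst p) (snd p)) ` (X \<times> Y))"
    using assms by (intro compact_continuous_image compact_Times)
  then obtain K where "K > 0" and K: "\<And>x y. x \<in> X \<Longrightarrow> y \<in> Y \<Longrightarrow> norm (g x y) \<le> K"
    by (fastforce dest: compact_imp_bounded simp: bounded_pos)
  have "K-lipschitz_on X (\<lambda>x. f x y)" if "y \<in> Y" for y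
  proof (rule bounded_derivative_imp_lipschitz[OF has_derivative_at_withinI[OF deriv] \<open>convex X\<close>])
    fix x assume "x \<in> X"
    show "onorm (\<lambda>h. inner (g x y) h) \<le> K"
    proof (rule onorm_bound)
      fix h
      show "norm (inner (g x y) h) \<le> K * norm h"
        using Cauchy_Schwarz_ineq2[of "g x y" h] K[OF \<open>x \<in> X\<close> that]
        by (simp add: order_trans mult_right_mono)
    qed (use \<open>K > 0\<close> in simp)
  qed (use that \<open>K > 0\<close> in auto)
  with \<open>K > 0\<close> show ?thesis
    by (intro exI[of _ K]) auto
qed

lemma quadratic_support_on_add_sq:
  assumes "quadratic_support_on \<mu> S \<phi>"
  shows "quadratic_support_on (\<mu> + r) S (\<lambda>u. \<phi> u + r / 2 * (norm (u - z))\<^sup>2)"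
  unfolding quadratic_support_on_def
proof
  fix x assume "x \<in> S"
  then obtain g where g: "\<forall>u\<in>S. \<phi> x + inner g (u - x) + \<mu> / 2 * (norm (u - x))\<^sup>2 \<le> \<phi> u"
    using assms by (auto simp: quadratic_support_on_def)
  show "\<exists>g. \<forall>u\<in>S. \<phi> x + r / 2 * (norm (x - z))\<^sup>2 + inner g (u - x) + (\<mu> + r) / 2 * (norm (u - x))\<^sup>2
      \<le> \<phi> u + r / 2 * (norm (u - z))\<^sup>2"
  proof (intro exI[of _ "g + r *\<^sub>R (x - z)"] ballI)
    fix u assume "u \<in> S"
    with g have "\<phi> x + inner g (u - x) + \<mu> / 2 * (norm (u - x))\<^sup>2 \<le> \<phi> u" by blast
    moreover have "inner (x - z) (u - x) = ((norm (u - z))\<^sup>2 - (norm (x - z))\<^sup>2 - (norm (u - x))\<^sup>2) / 2"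
      using dot_norm[of "x - z" "u - x"] by simp
    then have "inner (g + r *\<^sub>R (x - z)) (u - x)
        = inner g (u - x) + r / 2 * (norm (u - z))\<^sup>2 - r / 2 * (norm (x - z))\<^sup>2 - r / 2 * (norm (u - x))\<^sup>2"
      by (simp add: inner_add_left right_diff_distrib diff_divide_distrib)
    moreover have "(\<mu> + r) / 2 * (norm (u - x))\<^sup>2 = \<mu> / 2 * (norm (u - x))\<^sup>2 + r / 2 * (norm (u - x))\<^sup>2"
      by (simp add: add_divide_distrib distrib_right)
    ultimately show "\<phi> x + r / 2 * (norm (x - z))\<^sup>2 + inner (g + r *\<^sub>R (x - z)) (u - x)
        + (\<mu> + r) / 2 * (norm (u - x))\<^sup>2 \<le> \<phi> u + r / 2 * (norm (u - z))\<^sup>2"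
      by linarith
  qed
qed

lemma quadratic_support_minimizer_unique:
  assumes support: "quadratic_support_on \<mu> S \<phi>" and "0 < \<mu>" "convex S"
    and a: "a \<in> S" "\<forall>u\<in>S. \<phi> a \<le> \<phi> u" and b: "b \<in> S" "\<forall>u\<in>S. \<phi> b \<le> \<phi> u"
  shows "a = b"
proof (rule ccontr)
  assume "a \<noteq> b"
  define c where "c = (1/2) *\<^sub>R (a + b)"
  have "(1 - 1/2) *\<^sub>R a + (1/2) *\<^sub>R b \<in> S"
    using \<open>convex S\<close> a b by (intro convexD) auto
  then have c: "c \<in> S"
    by (simp add: c_def scaleR_add_right)
  then obtain g where g: "\<forall>u\<in>S. \<phi> c + inner g (u - c) + \<mu> / 2 * (norm (u - c))\<^sup>2 \<le> \<phi> u"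
    using support by (auto simp: quadratic_support_on_def)
  have ac: "a - c = (1/2) *\<^sub>R (a - b)" and bc: "b - c = - ((1/2) *\<^sub>R (a - b))"
    by (simp_all add: c_def algebra_simps flip: scaleR_add_left)
  have n: "(norm (a - c))\<^sup>2 = (norm (a - b))\<^sup>2 / 4" "(norm (b - c))\<^sup>2 = (norm (a - b))\<^sup>2 / 4"
    by (simp_all only: ac bc norm_minus_cancel norm_scaleR power_mult_distrib) (simp_all add: power2_eq_square)
  have i: "inner g (b - c) = - inner g (a - c)"
    by (simp add: ac bc)
  have "\<phi> c + inner g (a - c) + \<mu> / 2 * (norm (a - c))\<^sup>2 \<le> \<phi> a"
    "\<phi> c + inner g (b - c) + \<mu> / 2 * (norm (b - c))\<^sup>2 \<le> \<phi> b"
    using g a(1) b(1) by blast+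
  then have "2 * \<phi> c + \<mu> / 4 * (norm (a - b))\<^sup>2 \<le> \<phi> a + \<phi> b"
    unfolding n i by simp
  moreover have "0 < \<mu> / 4 * (norm (a - b))\<^sup>2"
    using \<open>0 < \<mu>\<close> \<open>a \<noteq> b\<close> by simp
  moreover have "\<phi> a \<le> \<phi> c" "\<phi> b \<le> \<phi> c"
    using a(2) b(2) c by blast+
  ultimately show False
    by linarith
qed

lemma primal_max_eq:
  assumes "y \<in> Y" "\<forall>y'\<in>Y. f x y' \<le> f x y"
  shows "primal_max Y f x = f x y"
  unfolding primal_max_def using assms by (intro cSup_eq_maximum) auto

lemma primal_max_upper:
  assumes "y \<in> Y" "\<exists>y0\<in>Y. \<forall>y'\<in>Y. f x y' \<le> f x y0"
  shows "f x y \<le> primal_max Y f x"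
proof -
  obtain y0 where "y0 \<in> Y" "\<forall>y'\<in>Y. f x y' \<le> f x y0"
    using assms(2) by blast
  with assms(1) show ?thesis
    using primal_max_eq[where f=f] by metis
qed

lemma quadratic_support_on_primal_max:
  assumes support: "\<And>y. y \<in> Y \<Longrightarrow> quadratic_support_on \<mu> X (\<lambda>x. f x y)"
    and max_att: "\<And>x. x \<in> X \<Longrightarrow> \<exists>y\<in>Y. \<forall>y'\<in>Y. f x y' \<le> f x y"
  shows "quadratic_support_on \<mu> X (primal_max Y f)"
  unfolding quadratic_support_on_def
proof
  fix x assume x: "x \<in> X"
  obtain y where y: "y \<in> Y" "\<forall>y'\<in>Y. f x y' \<le> f x y"
    using max_att[OF x] by blast
  obtain g where g: "\<forall>u\<in>X. f x y + inner g (u - x) + \<mu> / 2 * (norm (u - x))\<^sup>2 \<le> f u y"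
    using support[OF y(1)] x by (auto simp: quadratic_support_on_def)
  have "f u y \<le> primal_max Y f u" if "u \<in> X" for u
    using primal_max_upper[of y Y f u] y(1) max_att[OF that] by blast
  with g primal_max_eq[where f=f and x=x, OF y]
  show "\<exists>g. \<forall>u\<in>X. primal_max Y f x + inner g (u - x) + \<mu> / 2 * (norm (u - x))\<^sup>2
      \<le> primal_max Y f u"
    by (intro exI[of _ g]) force
qed

lemma lipschitz_on_primal_max:
  assumes lip: "\<And>y. y \<in> Y \<Longrightarrow> K-lipschitz_on X (\<lambda>x. f x y)" and "0 \<le> K"
    and max_att: "\<And>x. x \<in> X \<Longrightarrow> \<exists>y\<in>Y. \<forall>y'\<in>Y. f x y' \<le> f x y"
  shows "K-lipschitz_on X (primal_max Y f)"
proof -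
  have le: "primal_max Y f u - primal_max Y f x \<le> K * dist u x" if ux: "u \<in> X" "x \<in> X" for u x
  proof -
    obtain y where y: "y \<in> Y" "\<forall>y'\<in>Y. f u y' \<le> f u y"
      using max_att[OF ux(1)] by blast
    have "f u y - f x y \<le> K * dist u x"
      using lipschitz_onD[OF lip[OF y(1)] ux] by (simp add: dist_real_def)
    moreover have "f x y \<le> primal_max Y f x"
      using primal_max_upper[of y Y f x] y(1) max_att[OF ux(2)] by blast
    ultimately show ?thesis
      using primal_max_eq[where f=f and x=u, OF y] by linarith
  qed
  show ?thesis
  proof (rule lipschitz_onI[OF _ \<open>0 \<le> K\<close>])
    fix u x assume "u \<in> X" "x \<in> X"
    then show "dist (primal_max Y f u) (primal_max Y f x) \<le> K * dist u x"
      using le[of u x] le[of x u] by (simp add: dist_real_def dist_commute abs_le_iff)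
  qed
qed

lemma prox_point_minimizes:
  fixes X :: "'a::real_inner set"
  assumes "convex X" "compact X" "X \<noteq> {}"
    and cont: "continuous_on X (primal_max Y f)"
    and support: "quadratic_support_on (- L) X (primal_max Y f)" and "L < r"
  shows "prox_point X Y f r z \<in> X \<and>
    (\<forall>x'\<in>X. primal_max Y f (prox_point X Y f r z) + r / 2 * (norm (prox_point X Y f r z - z))\<^sup>2
             \<le> primal_max Y f x' + r / 2 * (norm (x' - z))\<^sup>2)"
proof -
  define \<Psi> where "\<Psi> u = primal_max Y f u + r / 2 * (norm (u - z))\<^sup>2" for u
  have "continuous_on X \<Psi>"
    unfolding \<Psi>_def by (intro continuous_intros cont)
  then obtain a where "a \<in> X" "\<forall>u\<in>X. \<Psi> a \<le> \<Psi> u"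
    using continuous_attains_inf[OF \<open>compact X\<close> \<open>X \<noteq> {}\<close>] by blast
  moreover have "quadratic_support_on (- L + r) X \<Psi>"
    unfolding \<Psi>_def by (rule quadratic_support_on_add_sq[OF support])
  ultimately have "\<exists>!a. a \<in> X \<and> (\<forall>u\<in>X. \<Psi> a \<le> \<Psi> u)"
    using quadratic_support_minimizer_unique[of "- L + r" X \<Psi>] \<open>convex X\<close> \<open>L < r\<close> by auto
  from theI'[OF this] show ?thesis
    unfolding prox_point_def \<Psi>_def .
qed

lemma prox_point_primal_max_minimizes:
  fixes X :: "'a::real_inner set" and Y :: "'b::topological_space set"
  assumes X: "convex X" "compact X" "X \<noteq> {}" and "compact Y"
    and deriv: "\<And>x y. x \<in> X \<Longrightarrow> y \<in> Y \<Longrightarrow> ((\<lambda>x. f x y) has_derivative (\<lambda>h. inner (g x y) h)) (at x)"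
    and cont: "continuous_on (X \<times> Y) (\<lambda>p. g (fst p) (snd p))"
    and lower: "\<And>x u y. x \<in> X \<Longrightarrow> u \<in> X \<Longrightarrow> y \<in> Y \<Longrightarrow>
                  f x y + inner (g x y) (u - x) - L / 2 * (norm (u - x))\<^sup>2 \<le> f u y"
    and max_att: "\<And>x. x \<in> X \<Longrightarrow> \<exists>y\<in>Y. \<forall>y'\<in>Y. f x y' \<le> f x y"
    and "L < r"
  shows "prox_point X Y f r z \<in> X \<and>
    (\<forall>x'\<in>X. primal_max Y f (prox_point X Y f r z) + r / 2 * (norm (prox_point X Y f r z - z))\<^sup>2
             \<le> primal_max Y f x' + r / 2 * (norm (x' - z))\<^sup>2)"
proof (rule prox_point_minimizes[OF X _ _ \<open>L < r\<close>])
  show "quadratic_support_on (- L) X (primal_max Y f)"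
  proof (rule quadratic_support_on_primal_max[OF _ max_att])
    fix y assume "y \<in> Y"
    then show "quadratic_support_on (- L) X (\<lambda>x. f x y)"
      using lower unfolding quadratic_support_on_def by fastforce
  qed
  obtain K where "0 \<le> K" "\<forall>y\<in>Y. K-lipschitz_on X (\<lambda>x. f x y)"
    using uniformly_lipschitz_of_continuous_gradient[OF X(1,2) \<open>compact Y\<close> cont deriv] by blast
  then show "continuous_on X (primal_max Y f)"
    by (intro lipschitz_on_continuous_on lipschitz_on_primal_max max_att) auto
qed

lemma inner_ge_infdist_normal_cone:
  fixes g :: "'a::real_inner"
  assumes "x \<in> X" "u \<in> X"
  shows "- (infdist 0 ((\<lambda>v. g + v) ` normal_cone X x) * norm (u - x)) \<le> inner g (u - x)"
proof (cases "u = x")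
  case False
  define A where "A = (\<lambda>v. g + v) ` normal_cone X x"
  have "0 \<in> normal_cone X x"
    using \<open>x \<in> X\<close> by (simp add: normal_cone_def)
  then have "A \<noteq> {}"
    by (auto simp: A_def)
  have "- inner g (u - x) / norm (u - x) \<le> dist 0 s" if "s \<in> A" for s
  proof -
    obtain v where v: "v \<in> normal_cone X x" and s: "s = g + v"
      using \<open>s \<in> A\<close> by (auto simp: A_def)
    have "inner v (u - x) \<le> 0"
      using v \<open>u \<in> X\<close> by (simp add: normal_cone_def split: if_splits)
    moreover have "- inner s (u - x) \<le> norm s * norm (u - x)"
      using Cauchy_Schwarz_ineq2[of s "u - x"] by (simp add: abs_le_iff)
    ultimately have "- inner g (u - x) \<le> norm s * norm (u - x)"
      by (simp add: s inner_add_left)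
    moreover have "0 < norm (u - x)"
      using False by simp
    ultimately show ?thesis
      using pos_divide_le_eq[of "norm (u - x)" "- inner g (u - x)" "norm s"] by simp
  qed
  then have "- inner g (u - x) / norm (u - x) \<le> infdist 0 A"
    unfolding infdist_notempty[OF \<open>A \<noteq> {}\<close>] using \<open>A \<noteq> {}\<close> by (intro cINF_greatest)
  moreover have "0 < norm (u - x)"
    using False by simp
  ultimately show ?thesis
    using pos_divide_le_eq[of "norm (u - x)" "- inner g (u - x)" "infdist 0 A"] by (simp add: A_def)
qed simp

lemma quadratic_le_imp_le:
  fixes d e A \<mu> :: real
  assumes "0 \<le> d" "0 \<le> e" "0 \<le> A" "0 < \<mu>" and quad: "\<mu> / 2 * d\<^sup>2 \<le> A + e * d"
  shows "d \<le> 4 * e / \<mu> + 2 * sqrt (A / \<mu>)"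
proof (cases "A \<le> e * d")
  case True
  with quad have "d * (\<mu> * d) \<le> d * (4 * e)"
    by (simp add: power2_eq_square algebra_simps)
  then have "d \<le> 4 * e / \<mu>"
    using assms by (cases "d = 0") (auto simp: mult_le_cancel_left pos_le_divide_eq mult.commute)
  moreover have "0 \<le> sqrt (A / \<mu>)"
    using assms by simp
  ultimately show ?thesis
    by linarith
next
  case False
  with quad have "d\<^sup>2 < (2 * sqrt (A / \<mu>))\<^sup>2"
    using assms by (simp add: power_mult_distrib field_simps)
  then have "d < 2 * sqrt (A / \<mu>)"
    by (rule power2_less_imp_less) (use assms in simp)
  then show ?thesis
    using assms by (simp add: add_increasing)
qed

lemma sqrt_le_powr_of_powr_le:
  fixes A c \<theta> \<mu> :: real
  assumes "0 \<le> A" "0 < \<theta>" "0 < \<mu>" and "A powr \<theta> \<le> c"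
  shows "sqrt (A / \<mu>) \<le> c powr (1 / (2 * \<theta>)) / sqrt \<mu>"
proof -
  have "A = (A powr \<theta>) powr (1 / \<theta>)"
    using assms by (simp add: powr_powr)
  also have "\<dots> \<le> c powr (1 / \<theta>)"
    using assms by (intro powr_mono2) auto
  finally have "sqrt A \<le> sqrt (c powr (1 / \<theta>))"
    by simp
  also have "\<dots> = c powr (1 / (2 * \<theta>))"
    using powr_half_sqrt_powr[of c "1 / \<theta>"] order_trans[OF powr_ge_zero \<open>A powr \<theta> \<le> c\<close>]
    by (simp add: mult.commute)
  finally show ?thesis
    using assms by (simp add: real_sqrt_divide divide_right_mono)
qed

lemma prox_distance_le_residuals:
  fixes P :: "'a::real_inner \<Rightarrow> real"
  assumes "x \<in> X" "p \<in> X" "L < r" "0 \<le> e" "a \<le> P x"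
    and minimal: "P p + r / 2 * (norm (p - x))\<^sup>2 \<le> P x"
    and lower: "a + inner g (p - x) - L / 2 * (norm (p - x))\<^sup>2 \<le> P p"
    and stationary: "infdist 0 ((\<lambda>v. g + v) ` normal_cone X x) \<le> e"
  shows "norm (p - x) \<le> 4 * e / (r - L) + 2 * sqrt ((P x - a) / (r - L))"
proof (rule quadratic_le_imp_le)
  have "infdist 0 ((\<lambda>v. g + v) ` normal_cone X x) * norm (p - x) \<le> e * norm (p - x)"
    using stationary by (simp add: mult_right_mono)
  then have "- (e * norm (p - x)) \<le> inner g (p - x)"
    using inner_ge_infdist_normal_cone[OF \<open>x \<in> X\<close> \<open>p \<in> X\<close>, of g] by linarith
  moreover have "(r - L) / 2 * (norm (p - x))\<^sup>2 = r / 2 * (norm (p - x))\<^sup>2 - L / 2 * (norm (p - x))\<^sup>2"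
    by (simp add: diff_divide_distrib left_diff_distrib)
  ultimately show "(r - L) / 2 * (norm (p - x))\<^sup>2 \<le> P x - a + e * norm (p - x)"
    using minimal lower by linarith
qed (use assms in auto)

lemma prox_distance_le_rate:
  fixes P :: "'a::real_inner \<Rightarrow> real"
  assumes "x \<in> X" "p \<in> X" "L < r" "0 < \<epsilon>" "0 < \<tau>" "0 < \<theta>" "a \<le> P x"
    and minimal: "P p + r / 2 * (norm (p - x))\<^sup>2 \<le> P x"
    and lower: "a + inner g (p - x) - L / 2 * (norm (p - x))\<^sup>2 \<le> P p"
    and stationary: "infdist 0 ((\<lambda>v. g + v) ` normal_cone X x) \<le> \<epsilon>"
    and gap: "(P x - a) powr \<theta> \<le> \<epsilon> / \<tau>"
  shows "norm (p - x) \<le> 4 / (r - L) * \<epsilon>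
           + 2 / (\<tau> powr (1 / (2 * \<theta>)) * sqrt (r - L)) * \<epsilon> powr (1 / (2 * \<theta>))"
proof -
  have "norm (p - x) \<le> 4 * \<epsilon> / (r - L) + 2 * sqrt ((P x - a) / (r - L))"
    using assms by (intro prox_distance_le_residuals[OF \<open>x \<in> X\<close> \<open>p \<in> X\<close>]) auto
  also have "sqrt ((P x - a) / (r - L)) \<le> (\<epsilon> / \<tau>) powr (1 / (2 * \<theta>)) / sqrt (r - L)"
    using assms by (intro sqrt_le_powr_of_powr_le) auto
  finally show ?thesis
    using assms by (simp add: powr_divide)
qed

lemma le_min_powr_rate:
  fixes d D a b \<epsilon> q :: real
  assumes "0 < \<epsilon>" "0 < q" "0 \<le> a" "0 \<le> b" "0 \<le> D"
    and "d \<le> D" "d \<le> a * \<epsilon> + b * \<epsilon> powr q"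
  shows "d \<le> (D + a + b) * \<epsilon> powr min 1 q"
proof (cases "1 \<le> \<epsilon>")
  case True
  then have "1 \<le> \<epsilon> powr min 1 q"
    using assms by (intro ge_one_powr_ge_zero) auto
  then have "D \<le> D * \<epsilon> powr min 1 q"
    using assms by (simp add: mult_le_cancel_left1)
  moreover have "0 \<le> a * \<epsilon> powr min 1 q" "0 \<le> b * \<epsilon> powr min 1 q"
    using assms by simp_all
  ultimately show ?thesis
    using assms unfolding distrib_right by linarith
next
  case False
  have "\<epsilon> \<le> \<epsilon> powr min 1 q" "\<epsilon> powr q \<le> \<epsilon> powr min 1 q"
    using assms False powr_mono'[of "min 1 q" 1 \<epsilon>] powr_mono'[of "min 1 q" q \<epsilon>] by auto
  then have "a * \<epsilon> + b * \<epsilon> powr q \<le> (a + b) * \<epsilon> powr min 1 q"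
    using assms by (simp add: distrib_right add_mono mult_left_mono)
  moreover have "0 \<le> D * \<epsilon> powr min 1 q"
    using assms by simp
  ultimately show ?thesis
    using assms unfolding distrib_right by linarith
qed

theorem mainTheorem8:
  fixes X :: "'a::euclidean_space set" and Y :: "'b::euclidean_space set"
    and f :: "'a \<Rightarrow> 'b \<Rightarrow> real"
    and gx :: "'a \<Rightarrow> 'b \<Rightarrow> 'a" and gy :: "'a \<Rightarrow> 'b \<Rightarrow> 'b"
    and Lx Ly r1 r2 \<tau> \<theta> :: real
  assumes X: "convex X" "compact X" "X \<noteq> {}"
    and Y: "convex Y" "compact Y" "Y \<noteq> {}"
    and deriv: "\<And>x y. ((\<lambda>p. f (fst p) (snd p)) has_derivative
                   (\<lambda>h. inner (gx x y) (fst h) + inner (gy x y) (snd h))) (at (x, y))"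
    and cont_gx: "continuous_on UNIV (\<lambda>p. gx (fst p) (snd p))"
    and cont_gy: "continuous_on UNIV (\<lambda>p. gy (fst p) (snd p))"
    and Lpos: "Lx > 0" "Ly > 0"
    and Lip_x: "\<And>x x' y y'. x \<in> X \<Longrightarrow> x' \<in> X \<Longrightarrow> y \<in> Y \<Longrightarrow> y' \<in> Y \<Longrightarrow>
                  norm (gx x y - gx x' y') \<le> Lx * (norm (x - x') + norm (y - y'))"
    and Lip_y: "\<And>x x' y y'. x \<in> X \<Longrightarrow> x' \<in> X \<Longrightarrow> y \<in> Y \<Longrightarrow> y' \<in> Y \<Longrightarrow>
                  norm (gy x y - gy x' y') \<le> Ly * (norm (x - x') + norm (y - y'))"
    and r1: "r1 > Lx" and r2: "r2 > Ly"
    and tau: "\<tau> > 0" and theta: "0 < \<theta>" "\<theta> < 1"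
    and max_att: "\<And>x. x \<in> X \<Longrightarrow> \<exists>y\<in>Y. \<forall>y'\<in>Y. f x y' \<le> f x y"
    and KL: "\<And>x y. x \<in> X \<Longrightarrow> y \<in> Y \<Longrightarrow>
               (primal_max Y f x - f x y) powr \<theta>
                 \<le> (1 / \<tau>) * infdist 0 ((\<lambda>v. - gy x y + v) ` normal_cone Y y)"
  shows "\<exists>C>0. \<forall>\<epsilon>>0. \<forall>x y. game_stationary X Y gx gy \<epsilon> x y \<longrightarrow>
           opt_stationary X Y f r1 (C * \<epsilon> powr (min 1 (1 / (2 * \<theta>)))) x"
proof -
  have partial: "\<And>x y. ((\<lambda>x. f x y) has_derivative (\<lambda>h. inner (gx x y) h)) (at x)"
    by (rule has_derivative_partial_fst[OF deriv])
  have lower: "f x y + inner (gx x y) (u - x) - Lx / 2 * (norm (u - x))\<^sup>2 \<le> f u y"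
    if "x \<in> X" "u \<in> X" "y \<in> Y" for x u y
    by (rule lipschitz_gradient_lower_bound[where g="\<lambda>x. gx x y", OF X(1)])
      (use partial Lip_x[of _ _ y y] that in auto)
  note prox = prox_point_primal_max_minimizes[OF X Y(2) partial
      continuous_on_subset[OF cont_gx subset_UNIV] lower max_att r1]
  define q where "q = 1 / (2 * \<theta>)"
  define C where "C = diameter X + 4 / (r1 - Lx) + 2 / (\<tau> powr q * sqrt (r1 - Lx))"
  have diam: "0 \<le> diameter X" "\<And>u x. u \<in> X \<Longrightarrow> x \<in> X \<Longrightarrow> norm (u - x) \<le> diameter X"
    using diameter_ge_0 diameter_bounded_bound[of X, unfolded dist_norm] compact_imp_bounded[OF X(2)]
    by auto
  show ?thesis
  proof (intro exI[of _ C] conjI allI impI)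
    show "0 < C"
      using r1 tau diam by (simp add: C_def add_nonneg_pos)
    fix \<epsilon> :: real and x y
    assume "0 < \<epsilon>" "game_stationary X Y gx gy \<epsilon> x y"
    then have x: "x \<in> X" and y: "y \<in> Y"
      and stat_x: "infdist 0 ((\<lambda>v. gx x y + v) ` normal_cone X x) \<le> \<epsilon>"
      and stat_y: "infdist 0 ((\<lambda>v. - gy x y + v) ` normal_cone Y y) \<le> \<epsilon>"
      by (auto simp: game_stationary_def)
    define p where "p = prox_point X Y f r1 x"
    have p: "p \<in> X" "primal_max Y f p + r1 / 2 * (norm (p - x))\<^sup>2 \<le> primal_max Y f x"
      using prox[of x] x by (auto simp: p_def)
    have "f x y \<le> primal_max Y f x" "f p y \<le> primal_max Y f p"
      using primal_max_upper[of y Y f] y max_att x p(1) by blast+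
    moreover have "(primal_max Y f x - f x y) powr \<theta> \<le> \<epsilon> / \<tau>"
      using KL[OF x y] divide_right_mono[OF stat_y, of \<tau>] tau by simp
    ultimately have "norm (p - x) \<le> 4 / (r1 - Lx) * \<epsilon> + 2 / (\<tau> powr q * sqrt (r1 - Lx)) * \<epsilon> powr q"
      unfolding q_def using lower[OF x p(1) y] p x r1 stat_x \<open>0 < \<epsilon>\<close> tau theta
      by (intro prox_distance_le_rate[of x X p]) auto
    then show "opt_stationary X Y f r1 (C * \<epsilon> powr min 1 (1 / (2 * \<theta>))) x"
      unfolding opt_stationary_def C_def p_def[symmetric] q_def[symmetric]
      using r1 tau theta \<open>0 < \<epsilon>\<close> diam p(1) x by (intro le_min_powr_rate) (auto simp: q_def)
  qed
qed

end
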